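(* Let $i\ge 2$ and let $c_0,\dots,c_{i-1}$ be the vertices of a cycle, each with a positive weight $w(c_j)$. Run the following procedure (BalanceInCycle): initialize $b_{OPT}\gets 0$, a queue $Q_1$ empty and a queue $Q_2$ containing $c_0,c_1,\dots,c_{i-1}$ in this order (head $c_0$). Repeat the following iteration until $c_0$ becomes the head of $Q_1$ for the second time: update $b_{OPT}\gets\max\{b_{OPT},\min(w(Q_1),w(Q_2))\}$; then, if $w(Q_1)>w(Q_2)$, dequeue the head of $Q_1$ and append it to the tail of $Q_2$, otherwise dequeue the head of $Q_2$ and append it to the tail of $Q_1$. Then this procedure terminates after $O(i)$ steps.
   Context: $w(Q)$ denotes the sum of the weights of the elements currently in queue $Q$. Queues are FIFO: elements are appended at the tail and removed at the head. (In the paper's application, the $c_j$ are the vertices of a cycle in the cactus representation of all minimum cuts of a graph, and $w(c_j)$ is the number of original graph vertices in the sub-cactus hanging off $c_j$.) *)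

theory Defs
  imports Complex_Main
begin

text \<open>Cycle vertices c_0..c_(i-1) are represented by the naturals 0..i-1; weights by w :: nat => real.
A state of BalanceInCycle is (Q1, Q2, b_OPT); queues are lists with the head at the front.\<close>

type_synonym bic_state = "nat list \<times> nat list \<times> real"

definition wq :: "(nat \<Rightarrow> real) \<Rightarrow> nat list \<Rightarrow> real" where
  "wq w Q = sum_list (map w Q)"

definition bic_step :: "(nat \<Rightarrow> real) \<Rightarrow> bic_state \<Rightarrow> bic_state" where
  "bic_step w s = (case s of (Q1, Q2, b) \<Rightarrow>
     (let b' = max b (min (wq w Q1) (wq w Q2)) in
      if wq w Q1 > wq w Q2 then (tl Q1, Q2 @ [hd Q1], b')
      else (Q1 @ [hd Q2], tl Q2, b')))"

definition bic_init :: "nat \<Rightarrow> bic_state" where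
  "bic_init i = ([], [0..<i], 0)"

definition bic_run :: "(nat \<Rightarrow> real) \<Rightarrow> nat \<Rightarrow> nat \<Rightarrow> bic_state" where
  "bic_run w i t = (bic_step w ^^ t) (bic_init i)"

definition head_Q1 :: "bic_state \<Rightarrow> nat option" where
  "head_Q1 s = (if fst s = [] then None else Some (hd (fst s)))"

definition becomes_head :: "(nat \<Rightarrow> real) \<Rightarrow> nat \<Rightarrow> nat \<Rightarrow> bool" where
  "becomes_head w i t \<longleftrightarrow> head_Q1 (bic_run w i t) = Some 0 \<and>
     (t = 0 \<or> head_Q1 (bic_run w i (t - 1)) \<noteq> Some 0)"

definition head_count :: "(nat \<Rightarrow> real) \<Rightarrow> nat \<Rightarrow> nat \<Rightarrow> nat" where
  "head_count w i t = card {s. s \<le> t \<and> becomes_head w i s}"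

definition bic_terminated_by :: "(nat \<Rightarrow> real) \<Rightarrow> nat \<Rightarrow> nat \<Rightarrow> bool" where
  "bic_terminated_by w i t \<longleftrightarrow> head_count w i t \<ge> 2"

end

theory Submission
  imports Defs
begin

text \<open>Both queues are always contiguous arcs of the cycle, cut at two pointers \<open>s \<le> e \<le> s + i\<close>
  that count the dequeues from \<open>Q\<^sub>1\<close> and \<open>Q\<^sub>2\<close>; positive weights ensure that the heavier queue is
  nonempty, so each iteration advances exactly one pointer and after \<open>t\<close> iterations \<open>s + e = t\<close>.
  The head of \<open>Q\<^sub>1\<close> is \<open>c\<^bsub>s mod i\<^esub>\<close>. Since \<open>e \<le> s + i\<close>, the pointer \<open>s\<close> exceeds \<open>i\<close> within \<open>3i + 1\<close>
  iterations; it steps from \<open>i\<close> to \<open>i + 1\<close> only with \<open>Q\<^sub>1\<close> nonempty, i.e. with \<open>c\<^sub>0\<close> at its head.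
  Before that, \<open>c\<^sub>0\<close> already became the head after the first iteration and lost that place when
  \<open>s\<close> reached 1, so it has become the head twice within \<open>3i\<close> iterations.\<close>

lemma ex_rising_edge:
  fixes P :: "nat \<Rightarrow> bool"
  assumes "\<not> P m" "P n" "m \<le> n"
  shows "\<exists>k. m \<le> k \<and> k < n \<and> \<not> P k \<and> P (Suc k)"
proof -
  obtain k where "k < n - m" "\<not> P (m + k)" "P (m + Suc k)"
    using ex_least_nat_less[of "\<lambda>k. P (m + k)" "n - m"] assms by auto
  then show ?thesis
    by (intro exI[of _ "m + k"]) auto
qed

lemma ex_late_return_to_start:
  fixes s e :: "nat \<Rightarrow> nat"
  assumes "2 \<le> i"
    and bound: "\<And>t. e t \<le> s t + i" and time: "\<And>t. s t + e t = t"
    and step: "\<And>t. s (Suc t) = s t \<or> s (Suc t) = Suc (s t) \<and> s t < e t"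
  defines "at_start t \<equiv> s t < e t \<and> s t mod i = 0"
  shows "\<exists>t. 1 < t \<and> t \<le> 3 * i \<and> at_start t \<and> \<not> at_start (t - 1)"
proof -
  have s_Suc: "s t \<le> s (Suc t)" for t
    using step[of t] by auto
  have s_mono: "s a \<le> s b" if "a \<le> b" for a b
    using s_Suc that by (rule lift_Suc_mono_le)
  have "s 0 = 0" "i < s (3 * i + 1)"
    using time[of 0] time[of "3 * i + 1"] bound[of "3 * i + 1"] by linarith+
  obtain u where "\<not> 0 < s u" "0 < s (Suc u)"
    using ex_rising_edge[of "\<lambda>t. 0 < s t" 0 "3 * i + 1"] \<open>s 0 = 0\<close> \<open>i < s (3 * i + 1)\<close>
    by auto
  then have "s u = 0" "s (Suc u) = 1" "s u < e u"
    using step[of u] by auto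
  have "2 \<le> Suc u" "\<not> at_start (Suc u)"
    using \<open>s u = 0\<close> \<open>s (Suc u) = 1\<close> \<open>s u < e u\<close> time[of u] \<open>2 \<le> i\<close>
    by (auto simp: at_start_def)
  obtain \<tau> where "\<tau> < 3 * i + 1" "\<not> i < s \<tau>" "i < s (Suc \<tau>)"
    using ex_rising_edge[of "\<lambda>t. i < s t" 0 "3 * i + 1"] \<open>s 0 = 0\<close> \<open>i < s (3 * i + 1)\<close>
    by auto
  then have "\<tau> \<le> 3 * i" "s \<tau> = i" "s \<tau> < e \<tau>"
    using step[of \<tau>] by auto
  then have "at_start \<tau>"
    by (simp add: at_start_def)
  have "Suc u \<le> \<tau>"
    using s_mono[of \<tau> "Suc u"] \<open>s (Suc u) = 1\<close> \<open>s \<tau> = i\<close> \<open>2 \<le> i\<close>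
    by (cases "Suc u \<le> \<tau>") auto
  then obtain v where "Suc u \<le> v" "v < \<tau>" "\<not> at_start v" "at_start (Suc v)"
    using ex_rising_edge[of at_start "Suc u" \<tau>] \<open>\<not> at_start (Suc u)\<close> \<open>at_start \<tau>\<close> by blast
  then show ?thesis
    using \<open>2 \<le> Suc u\<close> \<open>\<tau> \<le> 3 * i\<close> by (intro exI[of _ "Suc v"]) auto
qed

definition arc :: "nat \<Rightarrow> nat \<Rightarrow> nat \<Rightarrow> nat list" where
  "arc i a b = map (\<lambda>k. k mod i) [a..<b]"

definition arc_step :: "(nat \<Rightarrow> real) \<Rightarrow> nat \<Rightarrow> nat \<times> nat \<Rightarrow> nat \<times> nat" where
  "arc_step w i = (\<lambda>(s, e).
     if wq w (arc i e (s + i)) < wq w (arc i s e) then (Suc s, e) else (s, Suc e))"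

text \<open>The pointer pair \<open>(s, e)\<close> stands for the queues \<open>Q\<^sub>1 = arc i s e\<close>, \<open>Q\<^sub>2 = arc i e (s + i)\<close>.\<close>
definition arc_ptrs :: "(nat \<Rightarrow> real) \<Rightarrow> nat \<Rightarrow> nat \<Rightarrow> nat \<times> nat" where
  "arc_ptrs w i t = (arc_step w i ^^ t) (0, 0)"

lemma arc_empty: "arc i a a = []"
  by (simp add: arc_def)

lemma arc_Cons: "a < b \<Longrightarrow> arc i a b = a mod i # arc i (Suc a) b"
  by (simp add: arc_def upt_conv_Cons)

lemma arc_snoc: "a \<le> b \<Longrightarrow> arc i a (Suc b) = arc i a b @ [b mod i]"
  by (simp add: arc_def)

lemma wq_arc_nonneg:
  assumes "0 < i" "\<forall>j<i. 0 < w j"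
  shows "0 \<le> wq w (arc i a b)"
  unfolding wq_def arc_def using assms
  by (intro sum_list_nonneg) (auto intro: less_imp_le)

lemma wq_arc_pos:
  assumes "0 < i" "\<forall>j<i. 0 < w j" "a < b"
  shows "0 < wq w (arc i a b)"
proof -
  have "0 \<le> wq w (arc i (Suc a) b)"
    using wq_arc_nonneg[OF assms(1,2)] .
  moreover have "0 < w (a mod i)"
    using assms(1,2) by simp
  ultimately show ?thesis
    using assms(3) by (simp add: arc_Cons wq_def)
qed

lemma arc_step_cases:
  assumes "0 < i" "\<forall>j<i. 0 < w j" "s \<le> e" "e \<le> s + i"
  obtains
    "s < e" "wq w (arc i e (s + i)) < wq w (arc i s e)" "arc_step w i (s, e) = (Suc s, e)"
  | "e < s + i" "\<not> wq w (arc i e (s + i)) < wq w (arc i s e)" "arc_step w i (s, e) = (s, Suc e)"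
proof (cases "wq w (arc i e (s + i)) < wq w (arc i s e)")
  case True
  with wq_arc_pos[OF assms(1,2), of e "s + i"] have "s < e"
    using assms(1,3) by (cases "s = e") (auto simp: arc_empty wq_def)
  with True that(1) show ?thesis
    by (simp add: arc_step_def)
next
  case False
  with wq_arc_pos[OF assms(1,2), of s e] have "e < s + i"
    using assms(1,4) by (cases "e = s + i") (auto simp: arc_empty wq_def)
  with False that(2) show ?thesis
    by (simp add: arc_step_def)
qed

lemma arc_ptrs_0: "arc_ptrs w i 0 = (0, 0)"
  by (simp add: arc_ptrs_def)

lemma arc_ptrs_Suc: "arc_ptrs w i (Suc t) = arc_step w i (arc_ptrs w i t)"
  by (simp add: arc_ptrs_def)

lemma arc_ptrs_bounds:
  assumes "0 < i" "\<forall>j<i. 0 < w j" "arc_ptrs w i t = (s, e)"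
  shows "s \<le> e \<and> e \<le> s + i \<and> s + e = t"
  using assms(3)
proof (induction t arbitrary: s e)
  case 0
  then show ?case
    by (simp add: arc_ptrs_0)
next
  case (Suc t)
  obtain s0 e0 where ptrs: "arc_ptrs w i t = (s0, e0)"
    by fastforce
  with Suc.IH have bounds: "s0 \<le> e0" "e0 \<le> s0 + i" "s0 + e0 = t"
    by auto
  show ?case
    using Suc.prems ptrs bounds
    by (cases rule: arc_step_cases[OF assms(1,2) bounds(1,2)]) (auto simp: arc_ptrs_Suc)
qed

lemma arc_ptrs_Suc_fst:
  assumes "0 < i" "\<forall>j<i. 0 < w j" "arc_ptrs w i t = (s, e)"
  shows "fst (arc_ptrs w i (Suc t)) = s \<or> fst (arc_ptrs w i (Suc t)) = Suc s \<and> s < e"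
proof -
  have "s \<le> e" "e \<le> s + i"
    using arc_ptrs_bounds[OF assms] by auto
  then show ?thesis
    by (cases rule: arc_step_cases[OF assms(1,2)]) (auto simp: arc_ptrs_Suc assms(3))
qed

lemma bic_step_arcs:
  assumes "0 < i" "\<forall>j<i. 0 < w j" "s \<le> e" "e \<le> s + i"
  shows "\<exists>b'. bic_step w (arc i s e, arc i e (s + i), b) =
    (case arc_step w i (s, e) of (s', e') \<Rightarrow> (arc i s' e', arc i e' (s' + i), b'))"
proof (cases rule: arc_step_cases[OF assms])
  case 1
  have "hd (arc i s e) = s mod i"
    using 1(1) by (simp add: arc_Cons)
  moreover have "arc i e (Suc s + i) = arc i e (s + i) @ [s mod i]"
    using arc_snoc[OF assms(4)] by simp
  ultimately have "arc i e (Suc s + i) = arc i e (s + i) @ [hd (arc i s e)]"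
    by simp
  with 1 show ?thesis
    by (simp add: bic_step_def Let_def arc_Cons)
next
  case 2
  then show ?thesis
    by (simp add: bic_step_def Let_def arc_Cons arc_snoc assms(3))
qed

lemma bic_run_arcs:
  assumes "0 < i" "\<forall>j<i. 0 < w j"
  shows "\<exists>b. bic_run w i t = (case arc_ptrs w i t of (s, e) \<Rightarrow> (arc i s e, arc i e (s + i), b))"
proof (induction t)
  case 0
  have "map (\<lambda>k. k mod i) [0..<i] = [0..<i]"
    by (rule map_idI) simp
  then show ?case
    by (simp add: bic_run_def bic_init_def arc_ptrs_0 arc_def)
next
  case (Suc t)
  obtain s e where ptrs: "arc_ptrs w i t = (s, e)"
    by fastforce
  with Suc.IH obtain b where "bic_run w i t = (arc i s e, arc i e (s + i), b)"
    by auto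
  moreover have "s \<le> e" "e \<le> s + i"
    using arc_ptrs_bounds[OF assms ptrs] by auto
  ultimately show ?case
    using bic_step_arcs[OF assms] ptrs by (simp add: bic_run_def arc_ptrs_Suc)
qed

lemma head_Q1_bic_run:
  assumes "0 < i" "\<forall>j<i. 0 < w j" "arc_ptrs w i t = (s, e)"
  shows "head_Q1 (bic_run w i t) = (if s < e then Some (s mod i) else None)"
  using bic_run_arcs[OF assms(1,2), of t] assms(3)
  by (auto simp: head_Q1_def hd_map arc_def)

lemma bic_terminated_by_two_arrivals:
  assumes "becomes_head w i t\<^sub>1" "becomes_head w i t\<^sub>2" "t\<^sub>1 < t\<^sub>2" "t\<^sub>2 \<le> T"
  shows "bic_terminated_by w i T"
proof -
  have "card {t\<^sub>1, t\<^sub>2} \<le> head_count w i T"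
    unfolding head_count_def using assms by (intro card_mono) auto
  then show ?thesis
    using assms(3) by (simp add: bic_terminated_by_def)
qed

theorem lemma3:
  shows "\<exists>C::nat. \<forall>i::nat. \<forall>w::nat \<Rightarrow> real.
           i \<ge> 2 \<longrightarrow> (\<forall>j<i. w j > 0) \<longrightarrow> (\<exists>t \<le> C * i. bic_terminated_by w i t)"
proof (rule exI[of _ 3], intro allI impI)
  fix i :: nat and w :: "nat \<Rightarrow> real"
  assume "2 \<le> i" and pos: "\<forall>j<i. w j > 0"
  then have "0 < i"
    by simp
  define s e where "s t = fst (arc_ptrs w i t)" and "e t = snd (arc_ptrs w i t)" for t
  have ptrs: "arc_ptrs w i t = (s t, e t)" for t
    by (simp add: s_def e_def)
  note bounds = arc_ptrs_bounds[OF \<open>0 < i\<close> pos ptrs]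
  have head: "head_Q1 (bic_run w i t) = Some 0 \<longleftrightarrow> s t < e t \<and> s t mod i = 0" for t
    using head_Q1_bic_run[OF \<open>0 < i\<close> pos ptrs] by simp
  have "s 1 = 0" "e 1 = 1"
    using bounds[of 1] by auto
  then have "becomes_head w i 1"
    using bounds[of 0] by (simp add: becomes_head_def head)
  moreover obtain t where "1 < t" "t \<le> 3 * i" "becomes_head w i t"
    using ex_late_return_to_start[of i e s] \<open>2 \<le> i\<close> bounds
      arc_ptrs_Suc_fst[OF \<open>0 < i\<close> pos ptrs]
    by (auto simp: becomes_head_def head s_def[symmetric])
  ultimately show "\<exists>t \<le> 3 * i. bic_terminated_by w i t"
    using bic_terminated_by_two_arrivals by blast
qed

end
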